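(* Let $d\ge2$. There exists a constant $C<\infty$ depending only on $d$ such that for all Lebesgue measurable $E_1,E_2,E_3\subset\mathbb R^d$ of finite measure and all $k_1,k_2,k_3\in\mathbb Z$ with $|E'_{j,k_j}|>0$ for each $j$, $$\mathcal T(E_{1,k_1},E_{2,k_2},E_{3,k_3})\le C\,\theta\,\prod_{j=1}^3|E_{j,k_j}|^{2/3},$$ where $$\theta=\min_{m\ne n}2^{-|k_m-k_n|/3}\cdot\min_{\mu\ne\nu}\big(|E'_{\mu,k_\mu}|/|E'_{\nu,k_\nu}|\big)^{1/3},$$ the minima being over $m\ne n\in\{1,2,3\}$ and $\mu\ne\nu\in\{1,2,3\}$.
   Context: $\mathcal T(A_1,A_2,A_3)=\int\int\mathbf 1_{A_1}(x_1)\mathbf 1_{A_2}(x_2)\mathbf 1_{A_3}(-x_1-x_2)\,dx_1dx_2$. Write $x=(x',t)\in\mathbb R^{d-1}\times\mathbb R$, $\pi(x',t)=x'$, and $h_j(x')=|\{t\in\mathbb R:(x',t)\in E_j\}|$ (one-dimensional measure). For $k\in\mathbb Z$: $E'_{j,k}=\{x'\in\mathbb R^{d-1}:2^k\le h_j(x')<2^{k+1}\}$ and $E_{j,k}=E_j\cap\pi^{-1}(E'_{j,k})$. *)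

theory Defs
  imports "HOL-Analysis.Analysis"
begin

text \<open>R^d is modelled as 'a \<times> real with 'a a Euclidean space of dimension d-1 \<ge> 1.\<close>

definition trilin :: "('a::euclidean_space \<times> real) set \<Rightarrow> ('a \<times> real) set \<Rightarrow> ('a \<times> real) set \<Rightarrow> ennreal" where
  "trilin A1 A2 A3 = (\<integral>\<^sup>+ x1. (\<integral>\<^sup>+ x2. indicator A1 x1 * indicator A2 x2 * indicator A3 (- x1 - x2) \<partial>lebesgue) \<partial>lebesgue)"

definition fiber_len :: "('a::euclidean_space \<times> real) set \<Rightarrow> 'a \<Rightarrow> ennreal" where
  "fiber_len E x' = emeasure lebesgue {t::real. (x', t) \<in> E}"

definition layer' :: "('a::euclidean_space \<times> real) set \<Rightarrow> int \<Rightarrow> 'a set" where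
  "layer' E k = {x'. ennreal (2 powr real_of_int k) \<le> fiber_len E x' \<and> fiber_len E x' < ennreal (2 powr real_of_int (k + 1))}"

definition layer :: "('a::euclidean_space \<times> real) set \<Rightarrow> int \<Rightarrow> ('a \<times> real) set" where
  "layer E k = E \<inter> {x. fst x \<in> layer' E k}"

end

theory Submission
  imports Defs
begin

text \<open>Slicing along the last coordinate writes \<open>\<T>\<close> as an integral over \<open>(y\<^sub>1, y\<^sub>2)\<close> of the
  one-dimensional form evaluated on the fibres over \<open>y\<^sub>1\<close>, \<open>y\<^sub>2\<close> and \<open>-y\<^sub>1-y\<^sub>2\<close>. That form is at most
  the product of any two of the fibre lengths, which on \<open>E\<^sub>j\<^sub>,\<^sub>k\<close> are below \<open>2\<^bsup>k+1\<^esup>\<close> and vanish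
  off \<open>E'\<^sub>j\<^sub>,\<^sub>k\<close>; integrating bounds \<open>\<T>\<close> by \<open>4 \<cdot> 2\<^bsup>k\<^sub>i+k\<^sub>j\<^esup> |E'\<^sub>m| |E'\<^sub>n|\<close> for all
  \<open>i \<noteq> j\<close>, \<open>m \<noteq> n\<close>. As \<open>2\<^bsup>k\<^sub>j\<^esup> |E'\<^sub>j| \<le> |E\<^sub>j|\<close>, it remains to pick the pairs: for positive
  \<open>z\<^sub>1, z\<^sub>2, z\<^sub>3\<close> the smallest pairwise product is at most
  \<open>(z\<^sub>u / z\<^sub>v)\<^bsup>1/3\<^esup> (z\<^sub>1 z\<^sub>2 z\<^sub>3)\<^bsup>2/3\<^esup>\<close> for any \<open>u, v\<close>. This gives \<open>C = 4\<close>.\<close>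

definition trilinear_form :: "'a::euclidean_space set \<Rightarrow> 'a set \<Rightarrow> 'a set \<Rightarrow> ennreal" where
  "trilinear_form A B C =
     (\<integral>\<^sup>+u. \<integral>\<^sup>+v. indicator A u * indicator B v * indicator C (- u - v) \<partial>lborel \<partial>lborel)"

lemma lborel_distr_reflect:
  fixes u :: "'a::euclidean_space"
  shows "distr lborel borel (\<lambda>v. u - v) = lborel"
  using lborel_affine[of "-1" u] by (simp add: density_1)

lemma nn_integral_lborel_reflect:
  fixes u :: "'a::euclidean_space" and f :: "'a \<Rightarrow> ennreal"
  assumes [measurable]: "f \<in> borel_measurable borel"
  shows "(\<integral>\<^sup>+v. f (u - v) \<partial>lborel) = (\<integral>\<^sup>+v. f v \<partial>lborel)"
  by (subst (2) lborel_distr_reflect[of u, symmetric]) (simp add: nn_integral_distr)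

lemma AE_lborel_reflect:
  fixes u :: "'a::euclidean_space"
  assumes "AE v in lborel. P v"
  shows "AE v in lborel. P (u - v)"
proof -
  obtain N where N: "{v. \<not> P v} \<subseteq> N" "emeasure lborel N = 0" "N \<in> sets lborel"
    using assms by (auto elim!: AE_E)
  then have [measurable]: "N \<in> sets borel" by simp
  have "emeasure lborel {v. u - v \<in> N} = emeasure lborel N"
    using nn_integral_lborel_reflect[of "indicator N" u]
    by (simp add: nn_integral_indicator[symmetric] indicator_def del: nn_integral_indicator)
  with N show ?thesis
    by (intro AE_I[where N="{v. u - v \<in> N}"]) auto
qed

lemma trilinear_form_swap12:
  fixes A B C :: "'a::euclidean_space set"
  assumes [measurable]: "A \<in> sets borel" "B \<in> sets borel" "C \<in> sets borel"
  shows "trilinear_form A B C = trilinear_form B A C"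
proof -
  have "trilinear_form A B C
      = (\<integral>\<^sup>+v. \<integral>\<^sup>+u. indicator A u * indicator B v * indicator C (- u - v) \<partial>lborel \<partial>lborel)"
    unfolding trilinear_form_def
    by (rule lborel_pair.Fubini[symmetric, where f="\<lambda>(u,v). indicator A u * indicator B v * indicator C (- u - v)", simplified])
       measurable
  also have "\<dots> = trilinear_form B A C"
  proof -
    have "- u - v = - v - u" for u v :: 'a by simp
    then show ?thesis unfolding trilinear_form_def by (intro nn_integral_cong) (metis mult.commute)
  qed
  finally show ?thesis .
qed

lemma trilinear_form_swap23:
  fixes A B C :: "'a::euclidean_space set"
  assumes [measurable]: "A \<in> sets borel" "B \<in> sets borel" "C \<in> sets borel"
  shows "trilinear_form A B C = trilinear_form A C B"
proof -
  have "(\<integral>\<^sup>+v. indicator A u * indicator B v * indicator C (- u - v) \<partial>lborel)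
      = (\<integral>\<^sup>+v. indicator A u * indicator C v * indicator B (- u - v) \<partial>lborel)" for u :: 'a
  proof -
    have "(\<integral>\<^sup>+v. indicator A u * indicator B v * indicator C (- u - v) \<partial>lborel)
      = (\<integral>\<^sup>+v. indicator A u * indicator B (- u - v) * indicator C (- u - (- u - v)) \<partial>lborel)"
      by (rule nn_integral_lborel_reflect[of _ "- u", symmetric]) simp
    then show ?thesis by (simp add: mult_ac)
  qed
  then show ?thesis unfolding trilinear_form_def by simp
qed

lemma trilinear_form_le_emeasure_mult:
  fixes A B C :: "'a::euclidean_space set"
  assumes [measurable]: "A \<in> sets borel" "B \<in> sets borel"
  shows "trilinear_form A B C \<le> emeasure lborel A * emeasure lborel B"
proof -
  have "trilinear_form A B C \<le> (\<integral>\<^sup>+u. \<integral>\<^sup>+v. indicator A u * indicator B v \<partial>lborel \<partial>lborel)"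
    unfolding trilinear_form_def by (intro nn_integral_mono) (auto simp: indicator_def)
  also have "\<dots> = emeasure lborel A * emeasure lborel B"
    by (simp add: nn_integral_cmult nn_integral_multc)
  finally show ?thesis .
qed

lemma trilinear_form_le_emeasure_pair:
  fixes A :: "nat \<Rightarrow> 'a::euclidean_space set"
  assumes [measurable]: "A 1 \<in> sets borel" "A 2 \<in> sets borel" "A 3 \<in> sets borel"
    and "m \<in> {1,2,3}" "n \<in> {1,2,3}" "m \<noteq> n"
  shows "trilinear_form (A 1) (A 2) (A 3) \<le> emeasure lborel (A m) * emeasure lborel (A n)"
proof -
  have "trilinear_form (A 1) (A 2) (A 3) = trilinear_form (A 1) (A 3) (A 2)"
    by (rule trilinear_form_swap23) measurable
  moreover have "trilinear_form (A 1) (A 2) (A 3) = trilinear_form (A 2) (A 3) (A 1)"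
    by (subst trilinear_form_swap12, measurable, rule trilinear_form_swap23) measurable
  ultimately have "trilinear_form (A 1) (A 2) (A 3) \<le> emeasure lborel (A 1) * emeasure lborel (A 2)"
    "trilinear_form (A 1) (A 2) (A 3) \<le> emeasure lborel (A 1) * emeasure lborel (A 3)"
    "trilinear_form (A 1) (A 2) (A 3) \<le> emeasure lborel (A 2) * emeasure lborel (A 3)"
    using trilinear_form_le_emeasure_mult by (metis assms(1-3))+
  with assms(4-6) show ?thesis
    by (auto simp: mult.commute)
qed

lemma trilinear_form_le_if_emeasure_le:
  fixes A :: "nat \<Rightarrow> 'a::euclidean_space set" and c :: "nat \<Rightarrow> ennreal"
  assumes "A 1 \<in> sets borel" "A 2 \<in> sets borel" "A 3 \<in> sets borel"
    and le: "\<And>l. l \<in> {1,2,3} \<Longrightarrow> emeasure lborel (A l) \<le> (if P l then c l else 0)"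
    and ij: "i \<in> {1,2,3}" "j \<in> {1,2,3}" "i \<noteq> j"
  shows "trilinear_form (A 1) (A 2) (A 3) \<le> (if P 1 \<and> P 2 \<and> P 3 then c i * c j else 0)"
proof (cases "P 1 \<and> P 2 \<and> P 3")
  case True
  have "trilinear_form (A 1) (A 2) (A 3) \<le> emeasure lborel (A i) * emeasure lborel (A j)"
    using assms by (intro trilinear_form_le_emeasure_pair) auto
  also have "\<dots> \<le> c i * c j"
    using le[OF ij(1)] le[OF ij(2)] True ij by (intro mult_mono) auto
  finally show ?thesis using True by simp
next
  case False
  then obtain l where l: "l \<in> {1,2,3}" "\<not> P l" by auto
  define l' :: nat where "l' = (if l = 1 then 2 else 1)"
  have "trilinear_form (A 1) (A 2) (A 3) \<le> emeasure lborel (A l) * emeasure lborel (A l')"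
    using assms l by (intro trilinear_form_le_emeasure_pair) (auto simp: l'_def)
  also have "emeasure lborel (A l) = 0" using le[OF l(1)] l(2) by simp
  finally show ?thesis by simp
qed

lemma trilinear_form_prod:
  fixes G1 G2 G3 :: "('a::euclidean_space \<times> 'b::euclidean_space) set"
  assumes "G1 \<in> sets borel" "G2 \<in> sets borel" "G3 \<in> sets borel"
  shows "trilinear_form G1 G2 G3 = (\<integral>\<^sup>+y1. \<integral>\<^sup>+y2.
           trilinear_form (Pair y1 -` G1) (Pair y2 -` G2) (Pair (- y1 - y2) -` G3) \<partial>lborel \<partial>lborel)"
proof -
  have [measurable]: "G1 \<in> sets (borel \<Otimes>\<^sub>M borel)" "G2 \<in> sets (borel \<Otimes>\<^sub>M borel)" "G3 \<in> sets (borel \<Otimes>\<^sub>M borel)"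
    using assms unfolding borel_prod by simp_all
  have nn_integral_prod: "integral\<^sup>N lborel f = (\<integral>\<^sup>+y. \<integral>\<^sup>+t. f (y, t) \<partial>lborel \<partial>lborel)"
    if "f \<in> borel_measurable (lborel \<Otimes>\<^sub>M lborel)" for f :: "'a \<times> 'b \<Rightarrow> ennreal"
    using lborel.nn_integral_fst[OF that] by (simp add: lborel_prod)
  define g where "g y1 t1 y2 t2 = (indicator G1 (y1, t1) * indicator G2 (y2, t2)
    * indicator G3 (- y1 - y2, - t1 - t2) :: ennreal)" for y1 t1 y2 t2
  have [measurable]: "(\<lambda>(t1, y2). \<integral>\<^sup>+t2. g y1 t1 y2 t2 \<partial>lborel) \<in> borel_measurable (lborel \<Otimes>\<^sub>M lborel)" for y1
    unfolding g_def by measurable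
  have "trilinear_form G1 G2 G3 = (\<integral>\<^sup>+x1. \<integral>\<^sup>+x2. g (fst x1) (snd x1) (fst x2) (snd x2) \<partial>lborel \<partial>lborel)"
    unfolding trilinear_form_def g_def by (simp add: minus_prod_def)
  also have "\<dots> = (\<integral>\<^sup>+y1. \<integral>\<^sup>+t1. \<integral>\<^sup>+x2. g y1 t1 (fst x2) (snd x2) \<partial>lborel \<partial>lborel \<partial>lborel)"
    by (subst nn_integral_prod) (simp_all add: lborel_prod[symmetric] g_def)
  also have "\<dots> = (\<integral>\<^sup>+y1. \<integral>\<^sup>+t1. \<integral>\<^sup>+y2. \<integral>\<^sup>+t2. g y1 t1 y2 t2 \<partial>lborel \<partial>lborel \<partial>lborel \<partial>lborel)"
    by (intro nn_integral_cong, subst nn_integral_prod) (simp_all add: lborel_prod[symmetric] g_def[abs_def])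
  also have "\<dots> = (\<integral>\<^sup>+y1. \<integral>\<^sup>+y2. \<integral>\<^sup>+t1. \<integral>\<^sup>+t2. g y1 t1 y2 t2 \<partial>lborel \<partial>lborel \<partial>lborel \<partial>lborel)"
    by (intro nn_integral_cong lborel_pair.Fubini[symmetric, where f="\<lambda>(t1, y2). \<integral>\<^sup>+t2. g _ t1 y2 t2 \<partial>lborel", simplified])
       measurable
  also have "\<dots> = (\<integral>\<^sup>+y1. \<integral>\<^sup>+y2.
           trilinear_form (Pair y1 -` G1) (Pair y2 -` G2) (Pair (- y1 - y2) -` G3) \<partial>lborel \<partial>lborel)"
    unfolding trilinear_form_def g_def by (simp add: indicator_def)
  finally show ?thesis .
qed

lemma trilinear_form_prod_le:
  fixes G :: "nat \<Rightarrow> ('a::euclidean_space \<times> 'b::euclidean_space) set"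
    and S :: "nat \<Rightarrow> 'a set" and c :: "nat \<Rightarrow> ennreal"
  assumes G: "G 1 \<in> sets borel" "G 2 \<in> sets borel" "G 3 \<in> sets borel"
    and S [measurable]: "S 1 \<in> sets borel" "S 2 \<in> sets borel" "S 3 \<in> sets borel"
    and fiber: "\<And>l. l \<in> {1,2,3} \<Longrightarrow>
                  AE y in lborel. emeasure lborel (Pair y -` G l) \<le> c l * indicator (S l) y"
    and ij: "i \<in> {1,2,3}" "j \<in> {1,2,3}" "i \<noteq> j"
    and mn: "m \<in> {1,2,3}" "n \<in> {1,2,3}" "m \<noteq> n"
  shows "trilinear_form (G 1) (G 2) (G 3) \<le> c i * c j * (emeasure lborel (S m) * emeasure lborel (S n))"
proof -
  define B where "B y1 y2 = c i * c j * (indicator (S 1) y1 * indicator (S 2) y2 * indicator (S 3) (- y1 - y2))"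
    for y1 y2 :: 'a
  have pointwise: "trilinear_form (Pair y1 -` G 1) (Pair y2 -` G 2) (Pair (- y1 - y2) -` G 3) \<le> B y1 y2"
    if "emeasure lborel (Pair y1 -` G 1) \<le> c 1 * indicator (S 1) y1"
      "emeasure lborel (Pair y2 -` G 2) \<le> c 2 * indicator (S 2) y2"
      "emeasure lborel (Pair (- y1 - y2) -` G 3) \<le> c 3 * indicator (S 3) (- y1 - y2)" for y1 y2
  proof -
    define p where "p l = (if l = 1 then y1 else if l = 2 then y2 else - y1 - y2)" for l :: nat
    have fiber_sets: "Pair (p l) -` G l \<in> sets borel" if "l \<in> {1,2,3}" for l
    proof -
      have "G l \<in> sets (borel \<Otimes>\<^sub>M borel)" using that G unfolding borel_prod by auto
      then show ?thesis by (rule sets_Pair1)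
    qed
    have "trilinear_form (Pair (p 1) -` G 1) (Pair (p 2) -` G 2) (Pair (p 3) -` G 3)
        \<le> (if p 1 \<in> S 1 \<and> p 2 \<in> S 2 \<and> p 3 \<in> S 3 then c i * c j else 0)"
      using that by (intro trilinear_form_le_if_emeasure_le[OF _ _ _ _ ij] fiber_sets) (auto simp: p_def indicator_def)
    then show ?thesis unfolding B_def by (auto simp: p_def indicator_def split: if_splits)
  qed
  have "trilinear_form (G 1) (G 2) (G 3) = (\<integral>\<^sup>+y1. \<integral>\<^sup>+y2.
           trilinear_form (Pair y1 -` G 1) (Pair y2 -` G 2) (Pair (- y1 - y2) -` G 3) \<partial>lborel \<partial>lborel)"
    using G by (rule trilinear_form_prod)
  also have "\<dots> \<le> (\<integral>\<^sup>+y1. \<integral>\<^sup>+y2. B y1 y2 \<partial>lborel \<partial>lborel)"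
  proof (intro nn_integral_mono_AE)
    have fiber1: "AE y in lborel. emeasure lborel (Pair y -` G 1) \<le> c 1 * indicator (S 1) y"
      and fiber2: "AE y in lborel. emeasure lborel (Pair y -` G 2) \<le> c 2 * indicator (S 2) y"
      and fiber3: "AE y in lborel. emeasure lborel (Pair y -` G 3) \<le> c 3 * indicator (S 3) y"
      by (simp_all add: fiber)
    show "AE y1 in lborel. (\<integral>\<^sup>+y2. trilinear_form (Pair y1 -` G 1) (Pair y2 -` G 2) (Pair (- y1 - y2) -` G 3) \<partial>lborel)
        \<le> (\<integral>\<^sup>+y2. B y1 y2 \<partial>lborel)"
      using fiber1
    proof eventually_elim
      case (elim y1)
      have "AE y2 in lborel.
          trilinear_form (Pair y1 -` G 1) (Pair y2 -` G 2) (Pair (- y1 - y2) -` G 3) \<le> B y1 y2"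
        using fiber2 AE_lborel_reflect[OF fiber3, of "- y1"]
        by eventually_elim (rule pointwise[OF \<open>emeasure lborel (Pair y1 -` G 1) \<le> _\<close>])
      then show ?case by (rule nn_integral_mono_AE)
    qed
  qed
  also have "\<dots> = c i * c j * trilinear_form (S 1) (S 2) (S 3)"
    unfolding B_def trilinear_form_def
    by (subst nn_integral_cmult[symmetric], measurable, intro nn_integral_cong nn_integral_cmult) measurable
  also have "\<dots> \<le> c i * c j * (emeasure lborel (S m) * emeasure lborel (S n))"
    using trilinear_form_le_emeasure_pair[OF S mn] by (rule mult_left_mono) simp
  finally show ?thesis .
qed

lemma completion_sets_between:
  assumes "L \<in> sets (completion M)"
  obtains H G where "H \<in> sets M" "G \<in> sets M" "H \<subseteq> L" "L \<subseteq> G" "G - H \<in> null_sets M"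
proof -
  obtain S N N' where SN: "L = S \<union> N" "N \<subseteq> N'" "N' \<in> null_sets M" "S \<in> sets M"
    using assms by (rule sets_completionE)
  have "S \<union> N' - S = N' - S" by blast
  then have "S \<union> N' - S \<in> null_sets M"
    using null_set_Diff[OF SN(3,4)] by simp
  moreover have "S \<union> N' \<in> sets M" using SN(3,4) by auto
  ultimately show thesis
    using SN(1,2,4) by (intro that[of S "S \<union> N'"]) auto
qed

lemma AE_emeasure_Pair_eq:
  fixes H G :: "('a::euclidean_space \<times> 'b::euclidean_space) set"
  assumes "H \<in> sets borel" "G \<in> sets borel" "H \<subseteq> G" "G - H \<in> null_sets lborel"
  shows "AE y in lborel. emeasure lborel (Pair y -` G) = emeasure lborel (Pair y -` H)"
proof -
  have sets: "H \<in> sets (lborel \<Otimes>\<^sub>M lborel)" "G - H \<in> sets (lborel \<Otimes>\<^sub>M lborel)"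
    using assms unfolding lborel_prod by auto
  have "(\<integral>\<^sup>+y. emeasure lborel (Pair y -` (G - H)) \<partial>lborel) = 0"
    using null_setsD1[OF assms(4)] lborel.emeasure_pair_measure_alt[OF sets(2)] by (simp add: lborel_prod)
  then have "AE y in lborel. emeasure lborel (Pair y -` (G - H)) = 0"
    by (subst (asm) nn_integral_0_iff_AE) (use lborel.measurable_emeasure_Pair[OF sets(2)] in auto)
  then show ?thesis
  proof eventually_elim
    case (elim y)
    have "Pair y -` G = Pair y -` H \<union> Pair y -` (G - H)" using assms(3) by auto
    moreover have "Pair y -` (G - H) \<in> null_sets lborel"
      using elim sets_Pair1[OF sets(2)] by auto
    ultimately show ?case
      using sets_Pair1[OF sets(1)] by (simp add: emeasure_Un_null_set)
  qed
qed

lemma times_UNIV_sets_lebesgue: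
  fixes B :: "'a::euclidean_space set"
  assumes "B \<in> sets lebesgue"
  shows "B \<times> (UNIV :: 'b::euclidean_space set) \<in> sets lebesgue"
proof -
  obtain H G where HG: "H \<in> sets lborel" "G \<in> sets lborel" "H \<subseteq> B" "B \<subseteq> G" "G - H \<in> null_sets lborel"
    using assms by (rule completion_sets_between)
  have "(G - H) \<times> (UNIV :: 'b set) \<in> null_sets (lborel \<Otimes>\<^sub>M lborel)"
    using HG by (intro lborel.times_in_null_sets1) auto
  then have null: "(G - H) \<times> (UNIV :: 'b set) \<in> null_sets lborel"
    by (simp add: lborel_prod)
  have "H \<times> (UNIV :: 'b set) \<in> sets (lborel \<Otimes>\<^sub>M lborel)" using HG by auto
  then have "H \<times> (UNIV :: 'b set) \<in> sets lborel" by (metis lborel_prod)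
  with null HG show ?thesis
    by (intro sets_completionI[of _ "H \<times> UNIV" "(B - H) \<times> UNIV" "(G - H) \<times> UNIV"]) auto
qed

text \<open>Sets outside \<open>sets M\<close> have \<open>emeasure\<close> zero, so positive measure certifies measurability.\<close>

lemma sets_if_emeasure_pos:
  assumes "emeasure M A > 0"
  shows "A \<in> sets M"
proof (rule ccontr)
  assume "A \<notin> sets M"
  then have "emeasure M A = 0" by (rule emeasure_notin_sets)
  with assms show False by simp
qed

lemma layer_sets_lebesgue:
  assumes "E \<in> sets lebesgue" "emeasure lebesgue (layer' E k) > 0"
  shows "layer E k \<in> sets lebesgue"
proof -
  have "layer E k = E \<inter> layer' E k \<times> UNIV" by (auto simp: layer_def)
  with assms show ?thesis
    by (simp add: sets.Int times_UNIV_sets_lebesgue sets_if_emeasure_pos)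
qed

lemma vimage_Pair_layer:
  "Pair y -` layer E k = (if y \<in> layer' E k then Pair y -` E else {})"
  by (auto simp: layer_def)

lemma fiber_in_layer':
  assumes "y \<in> layer' E k"
  shows "Pair y -` E \<in> sets lebesgue"
    and "ennreal (2 powr k) \<le> emeasure lebesgue (Pair y -` E)"
    and "emeasure lebesgue (Pair y -` E) \<le> ennreal (2 * 2 powr k)"
proof -
  have "2 powr real_of_int (k + 1) = 2 * 2 powr k" by (simp add: powr_add)
  with assms show low: "ennreal (2 powr k) \<le> emeasure lebesgue (Pair y -` E)"
    and "emeasure lebesgue (Pair y -` E) \<le> ennreal (2 * 2 powr k)"
    unfolding layer'_def fiber_len_def vimage_def by (simp_all add: less_imp_le)
  have "0 < ennreal (2 powr k)" by simp
  also note low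
  finally show "Pair y -` E \<in> sets lebesgue" by (rule sets_if_emeasure_pos)
qed

text \<open>Fibres of a Lebesgue set need not be measurable. For a Borel hull \<open>G\<close> and kernel \<open>H\<close> of the layer
  with null difference, almost every fibre of \<open>G\<close> has the measure of the corresponding fibre of \<open>H\<close>,
  which lies inside a fibre of \<open>E\<close>.\<close>

lemma layer_borel_envelope:
  fixes E :: "('a::euclidean_space \<times> real) set"
  assumes "E \<in> sets lebesgue" "emeasure lebesgue (layer' E k) > 0"
  obtains G S where "G \<in> sets borel" "layer E k \<subseteq> G" "S \<in> sets borel"
    "emeasure lborel S = emeasure lebesgue (layer' E k)"
    "AE y in lborel. emeasure lborel (Pair y -` G) \<le> ennreal (2 * 2 powr k) * indicator S y"
proof -
  obtain H G where HG: "H \<in> sets borel" "G \<in> sets borel" "H \<subseteq> layer E k" "layer E k \<subseteq> G"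
      "G - H \<in> null_sets lborel"
    using layer_sets_lebesgue[OF assms] by (rule completion_sets_between) simp
  obtain S where S: "S \<in> sets borel" "layer' E k \<subseteq> S" "emeasure lebesgue (layer' E k) = emeasure lborel S"
    using completion_upper[OF sets_if_emeasure_pos[OF assms(2)]] by auto
  have "H \<in> sets (borel \<Otimes>\<^sub>M borel)" using HG unfolding borel_prod by simp
  then have H_fiber: "Pair y -` H \<in> sets borel" for y by (rule sets_Pair1)
  have "emeasure lborel (Pair y -` H) \<le> ennreal (2 * 2 powr k) * indicator S y" for y
  proof (cases "y \<in> layer' E k")
    case True
    have "emeasure lborel (Pair y -` H) = emeasure lebesgue (Pair y -` H)"
      using H_fiber by simp
    also have "\<dots> \<le> emeasure lebesgue (Pair y -` E)"
      using HG(3) True fiber_in_layer'(1)[OF True] H_fiber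
      by (intro emeasure_mono) (auto simp: layer_def)
    also have "\<dots> \<le> ennreal (2 * 2 powr k)" by (rule fiber_in_layer'(3)[OF True])
    finally show ?thesis using True S(2) by auto
  next
    case False
    then have "Pair y -` H = {}" using HG(3) vimage_Pair_layer[of y E k] by auto
    then show ?thesis by simp
  qed
  moreover have "AE y in lborel. emeasure lborel (Pair y -` G) = emeasure lborel (Pair y -` H)"
    using HG by (intro AE_emeasure_Pair_eq) auto
  ultimately have "AE y in lborel. emeasure lborel (Pair y -` G) \<le> ennreal (2 * 2 powr k) * indicator S y"
    by (auto elim: AE_mp)
  with HG S show thesis by (intro that) auto
qed

lemma emeasure_layer_ge:
  fixes E :: "('a::euclidean_space \<times> real) set"
  assumes "E \<in> sets lebesgue" "emeasure lebesgue (layer' E k) > 0"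
  shows "ennreal (2 powr k) * emeasure lebesgue (layer' E k) \<le> emeasure lebesgue (layer E k)"
proof -
  obtain G where G: "G \<in> sets borel" "layer E k \<subseteq> G" "emeasure lebesgue (layer E k) = emeasure lborel G"
    using completion_upper[OF layer_sets_lebesgue[OF assms]] by auto
  have G_sets: "G \<in> sets (lborel \<Otimes>\<^sub>M lborel)" using G unfolding lborel_prod by simp
  have "ennreal (2 powr k) * indicator (layer' E k) y \<le> emeasure lborel (Pair y -` G)" for y
  proof (cases "y \<in> layer' E k")
    case True
    have "ennreal (2 powr k) \<le> emeasure lebesgue (Pair y -` E)" by (rule fiber_in_layer'(2)[OF True])
    also have "\<dots> \<le> emeasure lebesgue (Pair y -` G)"
      using G(2) True fiber_in_layer'(1)[OF True] sets_Pair1[OF G_sets]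
      by (intro emeasure_mono) (auto simp: layer_def)
    also have "\<dots> = emeasure lborel (Pair y -` G)"
      using sets_Pair1[OF G_sets] by simp
    finally show ?thesis using True by simp
  qed simp
  then have "ennreal (2 powr k) * emeasure lebesgue (layer' E k)
      \<le> (\<integral>\<^sup>+y. emeasure lborel (Pair y -` G) \<partial>lebesgue)"
    using sets_if_emeasure_pos[OF assms(2)]
    by (subst nn_integral_cmult_indicator[symmetric]) (auto intro: nn_integral_mono)
  also have "\<dots> = emeasure lborel G"
    using lborel.emeasure_pair_measure_alt[OF G_sets] by (simp add: nn_integral_completion lborel_prod)
  finally show ?thesis using G(3) by simp
qed

lemma trilin_le_trilinear_form:
  assumes "A1 \<subseteq> G1" "A2 \<subseteq> G2" "A3 \<subseteq> G3"
  shows "trilin A1 A2 A3 \<le> trilinear_form G1 G2 G3"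
  unfolding trilin_def trilinear_form_def nn_integral_completion
  using assms by (intro nn_integral_mono) (auto simp: indicator_def)

lemma layer_measure_bounds:
  fixes E :: "('a::euclidean_space \<times> real) set"
  assumes "E \<in> sets lebesgue" "emeasure lebesgue E < \<infinity>" "emeasure lebesgue (layer' E k) > 0"
  shows "emeasure lebesgue (layer' E k) = ennreal (measure lebesgue (layer' E k))"
    and "measure lebesgue (layer' E k) > 0"
    and "2 powr k * measure lebesgue (layer' E k) \<le> measure lebesgue (layer E k)"
proof -
  have low: "ennreal (2 powr k) * emeasure lebesgue (layer' E k) \<le> emeasure lebesgue (layer E k)"
    using assms(1,3) by (rule emeasure_layer_ge)
  have "emeasure lebesgue (layer E k) \<le> emeasure lebesgue E"
    using assms(1) by (intro emeasure_mono) (auto simp: layer_def)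
  with assms(2) have layer_fin: "emeasure lebesgue (layer E k) \<noteq> top" by auto
  with low have "emeasure lebesgue (layer' E k) \<noteq> top"
    by (auto simp: ennreal_mult_eq_top_iff top_unique)
  then show eq: "emeasure lebesgue (layer' E k) = ennreal (measure lebesgue (layer' E k))"
    by (rule emeasure_eq_ennreal_measure)
  with assms(3) show "measure lebesgue (layer' E k) > 0" by simp
  have "ennreal (2 powr k * measure lebesgue (layer' E k)) \<le> ennreal (measure lebesgue (layer E k))"
    using low eq emeasure_eq_ennreal_measure[OF layer_fin] by (simp add: ennreal_mult)
  then show "2 powr k * measure lebesgue (layer' E k) \<le> measure lebesgue (layer E k)"
    by (simp add: ennreal_le_iff)
qed

lemma trilin_layers_le:
  fixes E :: "nat \<Rightarrow> ('a::euclidean_space \<times> real) set" and k :: "nat \<Rightarrow> int"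
  assumes E: "\<forall>j\<in>{1,2,3}. E j \<in> sets lebesgue \<and> emeasure lebesgue (E j) < \<infinity>
                \<and> emeasure lebesgue (layer' (E j) (k j)) > 0"
    and ij: "i \<in> {1,2,3}" "j \<in> {1,2,3}" "i \<noteq> j"
    and mn: "m \<in> {1,2,3}" "n \<in> {1,2,3}" "m \<noteq> n"
  shows "trilin (layer (E 1) (k 1)) (layer (E 2) (k 2)) (layer (E 3) (k 3))
    \<le> ennreal (4 * (2 powr k i * 2 powr k j)
         * (measure lebesgue (layer' (E m) (k m)) * measure lebesgue (layer' (E n) (k n))))"
proof -
  define envelope where "envelope j G S \<longleftrightarrow> G \<in> sets borel \<and> layer (E j) (k j) \<subseteq> G \<and> S \<in> sets borel
    \<and> emeasure lborel S = emeasure lebesgue (layer' (E j) (k j))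
    \<and> (AE y in lborel. emeasure lborel (Pair y -` G) \<le> ennreal (2 * 2 powr k j) * indicator S y)"
    for j G and S :: "'a set"
  have "\<exists>G S. envelope j G S" if "j \<in> {1,2,3}" for j
  proof -
    from E that have "E j \<in> sets lebesgue" "emeasure lebesgue (layer' (E j) (k j)) > 0" by auto
    then obtain G S where "envelope j G S"
      unfolding envelope_def by (rule layer_borel_envelope) blast
    then show ?thesis by blast
  qed
  then obtain G where "\<forall>j\<in>{1,2,3}. \<exists>S. envelope j (G j) S" by (metis bchoice)
  then obtain S where GS: "\<forall>j\<in>{1,2,3}. envelope j (G j) (S j)" by (metis bchoice)
  have S_measure: "emeasure lborel (S l) = ennreal (measure lebesgue (layer' (E l) (k l)))"
    if "l \<in> {1,2,3}" for l
  proof -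
    from E that have "E l \<in> sets lebesgue" "emeasure lebesgue (E l) < \<infinity>"
      "emeasure lebesgue (layer' (E l) (k l)) > 0" by auto
    then have "emeasure lebesgue (layer' (E l) (k l)) = ennreal (measure lebesgue (layer' (E l) (k l)))"
      by (rule layer_measure_bounds(1))
    with GS that show ?thesis unfolding envelope_def by auto
  qed
  have "trilin (layer (E 1) (k 1)) (layer (E 2) (k 2)) (layer (E 3) (k 3)) \<le> trilinear_form (G 1) (G 2) (G 3)"
    using GS unfolding envelope_def by (intro trilin_le_trilinear_form) auto
  also have "\<dots> \<le> ennreal (2 * 2 powr k i) * ennreal (2 * 2 powr k j) * (emeasure lborel (S m) * emeasure lborel (S n))"
    using GS unfolding envelope_def by (intro trilinear_form_prod_le ij mn) auto
  also have "\<dots> = ennreal (4 * (2 powr k i * 2 powr k j)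
         * (measure lebesgue (layer' (E m) (k m)) * measure lebesgue (layer' (E n) (k n))))"
    by (simp add: S_measure[OF mn(1)] S_measure[OF mn(2)] ennreal_mult' ennreal_mult mult_ac)
  finally show ?thesis .
qed

lemma pair_sum_le:
  fixes x :: "nat \<Rightarrow> real"
  assumes "u \<in> {1,2,3}" "v \<in> {1,2,3}"
  obtains i j where "i \<in> {1,2,3}" "j \<in> {1,2,3}" "i \<noteq> j"
    "x i + x j \<le> (x u - x v) / 3 + 2 / 3 * (x 1 + x 2 + x 3)"
proof (rule ccontr)
  define r where "r = (x u - x v) / 3 + 2 / 3 * (x 1 + x 2 + x 3)"
  assume "\<not> thesis"
  then have "r < x 1 + x 2" "r < x 1 + x 3" "r < x 2 + x 3"
    using that[of 1 2] that[of 1 3] that[of 2 3] unfolding r_def by force+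
  moreover have "x u = x 1 \<or> x u = x 2 \<or> x u = x 3" "x v = x 1 \<or> x v = x 2 \<or> x v = x 3"
    using assms by auto
  ultimately show False
    unfolding r_def by (elim disjE) (simp_all add: field_simps)
qed

lemma pair_product_le_powr:
  fixes z :: "nat \<Rightarrow> real"
  assumes pos: "\<And>l. l \<in> {1,2,3} \<Longrightarrow> z l > 0" and uv: "u \<in> {1,2,3}" "v \<in> {1,2,3}"
  obtains i j where "i \<in> {1,2,3}" "j \<in> {1,2,3}" "i \<noteq> j"
    "z i * z j \<le> (z u / z v) powr (1/3) * (z 1 * z 2 * z 3) powr (2/3)"
proof -
  obtain i j where ij: "i \<in> {1,2,3}" "j \<in> {1,2,3}" "i \<noteq> j"
    and le: "ln (z i) + ln (z j) \<le> (ln (z u) - ln (z v)) / 3 + 2 / 3 * (ln (z 1) + ln (z 2) + ln (z 3))"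
    using pair_sum_le[OF uv, of "\<lambda>l. ln (z l)"] by blast
  have z: "z 1 > 0" "z 2 > 0" "z 3 > 0" "z i > 0" "z j > 0" "z u > 0" "z v > 0"
    using pos ij uv by auto
  have "z i * z j = exp (ln (z i) + ln (z j))" using z by (simp add: exp_add)
  also have "\<dots> \<le> exp ((ln (z u) - ln (z v)) / 3 + 2 / 3 * (ln (z 1) + ln (z 2) + ln (z 3)))"
    using le by simp
  also have "\<dots> = exp ((ln (z u) - ln (z v)) / 3) * exp (2 / 3 * (ln (z 1) + ln (z 2) + ln (z 3)))"
    by (rule exp_add)
  also have "\<dots> = (z u / z v) powr (1/3) * (z 1 * z 2 * z 3) powr (2/3)"
    using z by (simp add: powr_def ln_div ln_mult)
  finally show thesis using ij that by blast
qed

lemma Min_pairs_attained: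
  fixes g :: "nat \<Rightarrow> nat \<Rightarrow> real"
  obtains p q where "p \<in> {1,2,3}" "q \<in> {1,2,3}" "p \<noteq> q"
    "Min {g m n | m n. m \<in> {1,2,3} \<and> n \<in> {1,2,3} \<and> m \<noteq> n} = g p q"
proof -
  define I :: "(nat \<times> nat) set" where "I = {1,2,3} \<times> {1,2,3} - Id"
  have eq: "{g m n | m n. m \<in> {1,2,3} \<and> n \<in> {1,2,3} \<and> m \<noteq> n} = case_prod g ` I"
    unfolding I_def by auto
  have "(1, 2) \<in> I" unfolding I_def by simp
  then have "Min (case_prod g ` I) \<in> case_prod g ` I"
    unfolding I_def by (intro Min_in) auto
  then obtain pq where pq: "pq \<in> I" "Min (case_prod g ` I) = case_prod g pq"
    by (rule imageE) simp
  show thesis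
  proof (rule that[of "fst pq" "snd pq"])
    show "fst pq \<in> {1,2,3}" "snd pq \<in> {1,2,3}" "fst pq \<noteq> snd pq"
      using pq(1) unfolding I_def by auto
    show "Min {g m n | m n. m \<in> {1,2,3} \<and> n \<in> {1,2,3} \<and> m \<noteq> n} = g (fst pq) (snd pq)"
      unfolding eq pq(2) by (simp add: case_prod_beta)
  qed
qed

lemma two_powr_neg_abs_diff:
  fixes k :: "nat \<Rightarrow> int"
  obtains u v where "u \<in> {p, q}" "v \<in> {p, q}"
    "2 powr (- \<bar>real_of_int (k p - k q)\<bar> / 3) = (2 powr k u / 2 powr k v) powr (1/3)"
proof -
  have *: "2 powr (- \<bar>real_of_int (k p - k q)\<bar> / 3) = (2 powr k u / 2 powr k v) powr (1/3)"
    if "k u - k v = - \<bar>k p - k q\<bar>" for u v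
    using that by (simp add: powr_diff[symmetric] powr_powr flip: of_int_diff)
  show thesis
  proof (cases "k p \<le> k q")
    case True
    then show thesis by (intro that[of p q] *) auto
  next
    case False
    then show thesis by (intro that[of q p] *) auto
  qed
qed

lemma trilin_layers_le_geometric:
  fixes E :: "nat \<Rightarrow> ('a::euclidean_space \<times> real) set" and k :: "nat \<Rightarrow> int"
  assumes E: "\<forall>j\<in>{1,2,3}. E j \<in> sets lebesgue \<and> emeasure lebesgue (E j) < \<infinity>
                \<and> emeasure lebesgue (layer' (E j) (k j)) > 0"
    and uv: "u \<in> {1,2,3}" "v \<in> {1,2,3}" and pq: "p \<in> {1,2,3}" "q \<in> {1,2,3}"
  shows "trilin (layer (E 1) (k 1)) (layer (E 2) (k 2)) (layer (E 3) (k 3))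
    \<le> ennreal (4 * ((2 powr k u / 2 powr k v) powr (1/3)
         * (measure lebesgue (layer' (E p) (k p)) / measure lebesgue (layer' (E q) (k q))) powr (1/3))
         * (\<Prod>j\<in>{1,2,3}. measure lebesgue (layer (E j) (k j)) powr (2/3)))"
proof -
  define a where "a l = 2 powr k l" for l
  define b where "b l = measure lebesgue (layer' (E l) (k l))" for l
  define \<mu> where "\<mu> l = measure lebesgue (layer (E l) (k l))" for l
  define \<theta> where "\<theta> = (a u / a v) powr (1/3) * (b p / b q) powr (1/3)"
  have a_pos: "a l > 0" for l by (simp add: a_def)
  have b_pos: "b l > 0" and ab_le: "a l * b l \<le> \<mu> l" if "l \<in> {1,2,3}" for l
    using E that layer_measure_bounds(2,3)[of "E l" "k l"] by (auto simp: a_def b_def \<mu>_def)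
  obtain i j where ij: "i \<in> {1,2,3}" "j \<in> {1,2,3}" "i \<noteq> j"
    and a_le: "a i * a j \<le> (a u / a v) powr (1/3) * (a 1 * a 2 * a 3) powr (2/3)"
    using pair_product_le_powr[of a, OF a_pos uv] by blast
  obtain m n where mn: "m \<in> {1,2,3}" "n \<in> {1,2,3}" "m \<noteq> n"
    and b_le: "b m * b n \<le> (b p / b q) powr (1/3) * (b 1 * b 2 * b 3) powr (2/3)"
    using pair_product_le_powr[of b, OF b_pos pq] by blast
  have "(a i * a j) * (b m * b n)
      \<le> ((a u / a v) powr (1/3) * (a 1 * a 2 * a 3) powr (2/3)) * ((b p / b q) powr (1/3) * (b 1 * b 2 * b 3) powr (2/3))"
    by (rule mult_mono[OF a_le b_le]) (use b_pos[OF mn(1)] b_pos[OF mn(2)] in auto)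
  also have "\<dots> = \<theta> * ((a 1 * b 1) * (a 2 * b 2) * (a 3 * b 3)) powr (2/3)"
    using a_pos b_pos by (simp add: \<theta>_def powr_mult[symmetric] mult_ac)
  also have "\<dots> \<le> \<theta> * (\<mu> 1 * \<mu> 2 * \<mu> 3) powr (2/3)"
  proof -
    have "b 1 > 0" "b 2 > 0" "b 3 > 0" "a 1 * b 1 \<le> \<mu> 1" "a 2 * b 2 \<le> \<mu> 2" "a 3 * b 3 \<le> \<mu> 3"
      using b_pos ab_le by simp_all
    moreover have "\<mu> 1 \<ge> 0" "\<mu> 2 \<ge> 0" by (simp_all add: \<mu>_def)
    ultimately show ?thesis
      using a_pos[of 1] a_pos[of 2] a_pos[of 3] unfolding \<theta>_def
      by (intro mult_left_mono powr_mono2 mult_mono) auto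
  qed
  also have "\<dots> = \<theta> * (\<Prod>j\<in>{1,2,3}. \<mu> j powr (2/3))"
    by (simp add: \<mu>_def powr_mult mult_ac)
  finally have real_le: "4 * (a i * a j) * (b m * b n) \<le> 4 * \<theta> * (\<Prod>j\<in>{1,2,3}. \<mu> j powr (2/3))"
    by simp
  have "trilin (layer (E 1) (k 1)) (layer (E 2) (k 2)) (layer (E 3) (k 3))
      \<le> ennreal (4 * (a i * a j) * (b m * b n))"
    using trilin_layers_le[OF E ij mn] unfolding a_def b_def .
  also have "\<dots> \<le> ennreal (4 * \<theta> * (\<Prod>j\<in>{1,2,3}. \<mu> j powr (2/3)))"
    using real_le by (rule ennreal_leI)
  finally show ?thesis
    unfolding a_def b_def \<mu>_def \<theta>_def .
qed

lemma trilin_layers_le_Min: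
  fixes E :: "nat \<Rightarrow> ('a::euclidean_space \<times> real) set" and k :: "nat \<Rightarrow> int"
  assumes E: "\<forall>j\<in>{1,2,3}. E j \<in> sets lebesgue \<and> emeasure lebesgue (E j) < \<infinity>
                \<and> emeasure lebesgue (layer' (E j) (k j)) > 0"
  shows "trilin (layer (E 1) (k 1)) (layer (E 2) (k 2)) (layer (E 3) (k 3))
    \<le> ennreal (4 *
         (Min {2 powr (- \<bar>real_of_int (k m - k n)\<bar> / 3) | m n. m \<in> {1,2,3} \<and> n \<in> {1,2,3} \<and> m \<noteq> n}
          * Min {(measure lebesgue (layer' (E \<mu>) (k \<mu>)) / measure lebesgue (layer' (E \<nu>) (k \<nu>))) powr (1/3)
                 | \<mu> \<nu>. \<mu> \<in> {1,2,3} \<and> \<nu> \<in> {1,2,3} \<and> \<mu> \<noteq> \<nu>})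
         * (\<Prod>j\<in>{1,2,3}. measure lebesgue (layer (E j) (k j)) powr (2/3)))"
proof -
  obtain p q where pq: "p \<in> {1,2,3}" "q \<in> {1,2,3}"
    and min_k: "Min {2 powr (- \<bar>real_of_int (k m - k n)\<bar> / 3) | m n. m \<in> {1,2,3} \<and> n \<in> {1,2,3} \<and> m \<noteq> n}
      = 2 powr (- \<bar>real_of_int (k p - k q)\<bar> / 3)"
    by (rule Min_pairs_attained)
  obtain u v where "u \<in> {p, q}" "v \<in> {p, q}"
    and powr_eq: "2 powr (- \<bar>real_of_int (k p - k q)\<bar> / 3) = (2 powr k u / 2 powr k v) powr (1/3)"
    by (rule two_powr_neg_abs_diff)
  with pq have uv: "u \<in> {1,2,3}" "v \<in> {1,2,3}" by auto
  obtain p' q' where p'q': "p' \<in> {1,2,3}" "q' \<in> {1,2,3}"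
    and min_layer': "Min {(measure lebesgue (layer' (E \<mu>) (k \<mu>)) / measure lebesgue (layer' (E \<nu>) (k \<nu>))) powr (1/3)
                   | \<mu> \<nu>. \<mu> \<in> {1,2,3} \<and> \<nu> \<in> {1,2,3} \<and> \<mu> \<noteq> \<nu>}
      = (measure lebesgue (layer' (E p') (k p')) / measure lebesgue (layer' (E q') (k q'))) powr (1/3)"
    by (rule Min_pairs_attained)
  show ?thesis
    unfolding min_k min_layer' powr_eq using trilin_layers_le_geometric[OF E uv p'q'] .
qed

theorem lemma5p2:
  "\<exists>C::real. \<forall>(E :: nat \<Rightarrow> ('a::euclidean_space \<times> real) set) (k :: nat \<Rightarrow> int).
     (\<forall>j\<in>{1,2,3}. E j \<in> sets lebesgue \<and> emeasure lebesgue (E j) < \<infinity>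
                    \<and> emeasure lebesgue (layer' (E j) (k j)) > 0) \<longrightarrow>
     trilin (layer (E 1) (k 1)) (layer (E 2) (k 2)) (layer (E 3) (k 3))
       \<le> ennreal (C *
           (Min {2 powr (- \<bar>real_of_int (k m - k n)\<bar> / 3) | m n. m \<in> {1,2,3} \<and> n \<in> {1,2,3} \<and> m \<noteq> n}
            * Min {(measure lebesgue (layer' (E \<mu>) (k \<mu>)) / measure lebesgue (layer' (E \<nu>) (k \<nu>))) powr (1/3)
                   | \<mu> \<nu>. \<mu> \<in> {1,2,3} \<and> \<nu> \<in> {1,2,3} \<and> \<mu> \<noteq> \<nu>})
           * (\<Prod>j\<in>{1,2,3}. measure lebesgue (layer (E j) (k j)) powr (2/3)))"
  using trilin_layers_le_Min by blast

end
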